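(* Let $\boldsymbol{A},\boldsymbol{B}\in\mathsf{PSL}$ and let $\mathbb{X},\mathbb{Y}$ be posets. (i) If $f\colon\boldsymbol{A}\to\boldsymbol{B}$ is a homomorphism, then $f_\ast\colon\boldsymbol{B}_\ast\rightharpoonup\boldsymbol{A}_\ast$ is a partial negative p-morphism. (ii) If $p\colon\mathbb{X}\rightharpoonup\mathbb{Y}$ is a partial negative p-morphism, then $\mathsf{Up}_{\mathsf{PSL}}(p)\colon\mathsf{Up}_{\mathsf{PSL}}(\mathbb{Y})\to\mathsf{Up}_{\mathsf{PSL}}(\mathbb{X})$ is a homomorphism.
   Context: $\mathsf{PSL}$ is the class of pseudocomplemented semilattices $\langle A;\land,\lnot,0,1\rangle$: $\langle A;\land\rangle$ is a semilattice (order $a\le b$ iff $a\land b=a$) with minimum $0$ and maximum $1$, and $c\land a=0\iff c\le\lnot a$ for all $a,c$. A filter of $\boldsymbol{A}$ is a nonempty upset closed under $\land$; it is meet irreducible if proper and not the intersection of two filters both different from it; $\boldsymbol{A}_\ast$ is the poset of meet irreducible filters under inclusion. A partial function $p\colon X\rightharpoonup Y$ is a function from $\mathsf{dom}(p)\subseteq X$ to $Y$; between posets it is order preserving if $x\le z$ in $\mathsf{dom}(p)$ implies $p(x)\le p(z)$. An order preserving $p\colon\mathbb{X}\rightharpoonup\mathbb{Y}$ is a partial negative p-morphism if $X={\downarrow}\{x\in X:{\uparrow}x\subseteq\mathsf{dom}(p)\}$ and whenever $x\in\mathsf{dom}(p)$, $y\in Y$, $p(x)\le y$, there is $z\in\mathsf{dom}(p)$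 with $x\le z$ and $y\le p(z)$. For a homomorphism $f$, $f_\ast$ has domain $\{F\in\boldsymbol{B}_\ast: f^{-1}[F]\in\boldsymbol{A}_\ast\}$ and $f_\ast(F)=f^{-1}[F]$. For a poset $\mathbb{X}$, $\mathsf{Up}_{\mathsf{PSL}}(\mathbb{X})=\langle\mathsf{Up}(\mathbb{X});\cap,\lnot,\emptyset,X\rangle$ where $\mathsf{Up}(\mathbb{X})$ is the set of upsets and $\lnot U = X\smallsetminus{\downarrow}U$; and $\mathsf{Up}_{\mathsf{PSL}}(p)(U)=X\smallsetminus{\downarrow}p^{-1}[Y\smallsetminus U]$. *)

theory Defs
  imports Main
begin

record 'a psl =
  pcar  :: "'a set"
  pmeet :: "'a \<Rightarrow> 'a \<Rightarrow> 'a"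
  pneg  :: "'a \<Rightarrow> 'a"
  pzero :: 'a
  pone  :: 'a

definition psl_le :: "'a psl \<Rightarrow> 'a \<Rightarrow> 'a \<Rightarrow> bool" where
  "psl_le A a b \<longleftrightarrow> pmeet A a b = a"

definition is_psl :: "'a psl \<Rightarrow> bool" where
  "is_psl A \<longleftrightarrow>
     (\<forall>a\<in>pcar A. \<forall>b\<in>pcar A. pmeet A a b \<in> pcar A) \<and>
     (\<forall>a\<in>pcar A. pneg A a \<in> pcar A) \<and>
     pzero A \<in> pcar A \<and> pone A \<in> pcar A \<and>
     (\<forall>a\<in>pcar A. pmeet A a a = a) \<and>
     (\<forall>a\<in>pcar A. \<forall>b\<in>pcar A. pmeet A a b = pmeet A b a) \<and>
     (\<forall>a\<in>pcar A. \<forall>b\<in>pcar A. \<forall>c\<in>pcar A.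
        pmeet A (pmeet A a b) c = pmeet A a (pmeet A b c)) \<and>
     (\<forall>a\<in>pcar A. psl_le A (pzero A) a \<and> psl_le A a (pone A)) \<and>
     (\<forall>a\<in>pcar A. \<forall>c\<in>pcar A. pmeet A c a = pzero A \<longleftrightarrow> psl_le A c (pneg A a))"

definition psl_hom :: "'a psl \<Rightarrow> 'b psl \<Rightarrow> ('a \<Rightarrow> 'b) \<Rightarrow> bool" where
  "psl_hom A B f \<longleftrightarrow>
     (\<forall>a\<in>pcar A. f a \<in> pcar B) \<and>
     (\<forall>a\<in>pcar A. \<forall>b\<in>pcar A. f (pmeet A a b) = pmeet B (f a) (f b)) \<and>
     (\<forall>a\<in>pcar A. f (pneg A a) = pneg B (f a)) \<and>
     f (pzero A) = pzero B \<and> f (pone A) = pone B"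

definition is_filter :: "'a psl \<Rightarrow> 'a set \<Rightarrow> bool" where
  "is_filter A F \<longleftrightarrow> F \<subseteq> pcar A \<and> F \<noteq> {} \<and>
     (\<forall>a\<in>F. \<forall>b\<in>pcar A. psl_le A a b \<longrightarrow> b \<in> F) \<and>
     (\<forall>a\<in>F. \<forall>b\<in>F. pmeet A a b \<in> F)"

definition mi_filter :: "'a psl \<Rightarrow> 'a set \<Rightarrow> bool" where
  "mi_filter A F \<longleftrightarrow> is_filter A F \<and> F \<noteq> pcar A \<and>
     \<not> (\<exists>G H. is_filter A G \<and> is_filter A H \<and> G \<noteq> F \<and> H \<noteq> F \<and> F = G \<inter> H)"

text \<open>The poset A_* : the set of meet irreducible filters (ordered by inclusion).\<close>
definition mi_filters :: "'a psl \<Rightarrow> 'a set set" where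
  "mi_filters A = {F. mi_filter A F}"

definition lower_star :: "'a psl \<Rightarrow> 'b psl \<Rightarrow> ('a \<Rightarrow> 'b) \<Rightarrow> 'b set \<Rightarrow> 'a set option" where
  "lower_star A B f F =
     (if F \<in> mi_filters B \<and> {a \<in> pcar A. f a \<in> F} \<in> mi_filters A
      then Some {a \<in> pcar A. f a \<in> F} else None)"

definition is_poset :: "'x set \<Rightarrow> ('x \<Rightarrow> 'x \<Rightarrow> bool) \<Rightarrow> bool" where
  "is_poset X le \<longleftrightarrow> (\<forall>x\<in>X. le x x) \<and>
     (\<forall>x\<in>X. \<forall>y\<in>X. le x y \<and> le y x \<longrightarrow> x = y) \<and>
     (\<forall>x\<in>X. \<forall>y\<in>X. \<forall>z\<in>X. le x y \<and> le y z \<longrightarrow> le x z)"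

definition down :: "'x set \<Rightarrow> ('x \<Rightarrow> 'x \<Rightarrow> bool) \<Rightarrow> 'x set \<Rightarrow> 'x set" where
  "down X le S = {x\<in>X. \<exists>s\<in>S. le x s}"

definition up :: "'x set \<Rightarrow> ('x \<Rightarrow> 'x \<Rightarrow> bool) \<Rightarrow> 'x set \<Rightarrow> 'x set" where
  "up X le S = {x\<in>X. \<exists>s\<in>S. le s x}"

definition is_upset :: "'x set \<Rightarrow> ('x \<Rightarrow> 'x \<Rightarrow> bool) \<Rightarrow> 'x set \<Rightarrow> bool" where
  "is_upset X le U \<longleftrightarrow> U \<subseteq> X \<and> (\<forall>u\<in>U. \<forall>x\<in>X. le u x \<longrightarrow> x \<in> U)"

definition partial_neg_pmorphism ::
  "'x set \<Rightarrow> ('x \<Rightarrow> 'x \<Rightarrow> bool) \<Rightarrow> 'y set \<Rightarrow> ('y \<Rightarrow> 'y \<Rightarrow> bool) \<Rightarrow> ('x \<Rightarrow> 'y option) \<Rightarrow> bool" where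
  "partial_neg_pmorphism X leX Y leY p \<longleftrightarrow>
     dom p \<subseteq> X \<and> (\<forall>x\<in>dom p. the (p x) \<in> Y) \<and>
     (\<forall>x\<in>dom p. \<forall>z\<in>dom p. leX x z \<longrightarrow> leY (the (p x)) (the (p z))) \<and>
     X = down X leX {x\<in>X. up X leX {x} \<subseteq> dom p} \<and>
     (\<forall>x\<in>dom p. \<forall>y\<in>Y. leY (the (p x)) y \<longrightarrow>
        (\<exists>z\<in>dom p. leX x z \<and> leY y (the (p z))))"

definition up_psl :: "'x set \<Rightarrow> ('x \<Rightarrow> 'x \<Rightarrow> bool) \<Rightarrow> 'x set psl" where
  "up_psl X le = \<lparr> pcar = {U. is_upset X le U}, pmeet = (\<inter>),
      pneg = (\<lambda>U. X - down X le U), pzero = {}, pone = X \<rparr>"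

definition up_map ::
  "'x set \<Rightarrow> ('x \<Rightarrow> 'x \<Rightarrow> bool) \<Rightarrow> 'y set \<Rightarrow> ('x \<Rightarrow> 'y option) \<Rightarrow> 'y set \<Rightarrow> 'x set" where
  "up_map X leX Y p U = X - down X leX {x\<in>X. \<exists>y. p x = Some y \<and> y \<in> Y - U}"

end

theory Submission
  imports Defs
begin

text \<open>
  (i) Call a proper filter an ultrafilter if it contains \<open>a\<close> or \<open>\<not>a\<close> for every \<open>a\<close>.
  By Zorn's lemma every proper filter lies in an ultrafilter; ultrafilters are meet
  irreducible and maximal in \<open>B\<^sub>*\<close>, and their preimages under a homomorphism are again
  ultrafilters. Hence every point of \<open>B\<^sub>*\<close> lies below a point of \<open>dom f\<^sub>*\<close> whose upset is
  just itself. For the back condition, given \<open>f\<^sup>-\<^sup>1[F] \<subseteq> G\<close> the filter generated by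
  \<open>F \<union> f[G]\<close> is proper, since \<open>c \<and> f a = 0\<close> with \<open>c \<in> F\<close> gives \<open>f(\<not>a) \<in> F\<close>, hence
  \<open>\<not>a \<in> G\<close>; any ultrafilter above it is the required point.

  (ii) Intersections and the top are preserved by construction, and \<open>\<emptyset>\<close> because every
  point of \<open>X\<close> lies below a point of \<open>dom p\<close>. For \<open>\<not>\<close>, one inclusion uses that same
  fact; the other uses the back condition together with monotonicity of \<open>p\<close>.
\<close>

definition filter_join :: "'a psl \<Rightarrow> 'a set \<Rightarrow> 'a set \<Rightarrow> 'a set" where
  "filter_join A F S = {b \<in> pcar A. \<exists>c\<in>F. \<exists>d\<in>S. psl_le A (pmeet A c d) b}"

definition ultrafilter :: "'a psl \<Rightarrow> 'a set \<Rightarrow> bool" where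
  "ultrafilter A M \<longleftrightarrow> is_filter A M \<and> pzero A \<notin> M \<and> (\<forall>a\<in>pcar A. a \<in> M \<or> pneg A a \<in> M)"

locale pseudocomplemented_semilattice =
  fixes A :: "'a psl"
  assumes is_psl: "is_psl A"
begin

lemma meet_closed: "a \<in> pcar A \<Longrightarrow> b \<in> pcar A \<Longrightarrow> pmeet A a b \<in> pcar A"
  and neg_closed: "a \<in> pcar A \<Longrightarrow> pneg A a \<in> pcar A"
  and zero_closed: "pzero A \<in> pcar A"
  and one_closed: "pone A \<in> pcar A"
  using is_psl unfolding is_psl_def by blast+

lemma le_refl: "a \<in> pcar A \<Longrightarrow> psl_le A a a"
  using is_psl unfolding is_psl_def psl_le_def by blast

lemma le_trans:
  "\<lbrakk>a \<in> pcar A; b \<in> pcar A; c \<in> pcar A; psl_le A a b; psl_le A b c\<rbrakk> \<Longrightarrow> psl_le A a c"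
  using is_psl unfolding is_psl_def psl_le_def by metis

lemma meet_le1: "a \<in> pcar A \<Longrightarrow> b \<in> pcar A \<Longrightarrow> psl_le A (pmeet A a b) a"
  and meet_le2: "a \<in> pcar A \<Longrightarrow> b \<in> pcar A \<Longrightarrow> psl_le A (pmeet A a b) b"
  using is_psl unfolding is_psl_def psl_le_def by metis+

lemma le_meetI:
  "\<lbrakk>c \<in> pcar A; a \<in> pcar A; b \<in> pcar A; psl_le A c a; psl_le A c b\<rbrakk> \<Longrightarrow> psl_le A c (pmeet A a b)"
  using is_psl unfolding is_psl_def psl_le_def by metis

lemma meet_mono:
  assumes "a \<in> pcar A" "b \<in> pcar A" "a' \<in> pcar A" "b' \<in> pcar A"
    and "psl_le A a a'" "psl_le A b b'"
  shows "psl_le A (pmeet A a b) (pmeet A a' b')"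
  using assms le_meetI le_trans meet_le1 meet_le2 meet_closed by meson

lemma zero_le: "a \<in> pcar A \<Longrightarrow> psl_le A (pzero A) a"
  and le_one: "a \<in> pcar A \<Longrightarrow> psl_le A a (pone A)"
  using is_psl unfolding is_psl_def by blast+

lemma le_zero_iff: "a \<in> pcar A \<Longrightarrow> psl_le A a (pzero A) \<longleftrightarrow> a = pzero A"
  using is_psl unfolding is_psl_def psl_le_def by metis

lemma meet_eq_zero_iff_le_neg:
  "a \<in> pcar A \<Longrightarrow> c \<in> pcar A \<Longrightarrow> pmeet A c a = pzero A \<longleftrightarrow> psl_le A c (pneg A a)"
  using is_psl unfolding is_psl_def by blast

lemma meet_idem: "a \<in> pcar A \<Longrightarrow> pmeet A a a = a"
  using is_psl unfolding is_psl_def by blast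

lemma meet_neg_self: "a \<in> pcar A \<Longrightarrow> pmeet A a (pneg A a) = pzero A"
  using meet_eq_zero_iff_le_neg le_refl neg_closed is_psl unfolding is_psl_def by metis

lemma filter_subset_carrier: "is_filter A F \<Longrightarrow> F \<subseteq> pcar A"
  unfolding is_filter_def by blast

lemma filter_upward_closed: "\<lbrakk>is_filter A F; a \<in> F; b \<in> pcar A; psl_le A a b\<rbrakk> \<Longrightarrow> b \<in> F"
  and filter_meet_mem: "\<lbrakk>is_filter A F; a \<in> F; b \<in> F\<rbrakk> \<Longrightarrow> pmeet A a b \<in> F"
  unfolding is_filter_def by blast+

lemma filter_one_mem: "is_filter A F \<Longrightarrow> pone A \<in> F"
  unfolding is_filter_def using le_one one_closed by blast

lemma zero_mem_filter_iff: "is_filter A F \<Longrightarrow> pzero A \<in> F \<longleftrightarrow> F = pcar A"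
  unfolding is_filter_def using zero_le zero_closed by blast

lemma is_filter_Union_chain:
  assumes "\<C> \<noteq> {}" "subset.chain {F. is_filter A F} \<C>"
  shows "is_filter A (\<Union>\<C>)"
proof -
  have filters: "\<And>F. F \<in> \<C> \<Longrightarrow> is_filter A F"
    and comparable: "\<And>F G. F \<in> \<C> \<Longrightarrow> G \<in> \<C> \<Longrightarrow> F \<subseteq> G \<or> G \<subseteq> F"
    using assms(2) unfolding subset_chain_def by blast+
  have "pmeet A a b \<in> \<Union>\<C>" if "a \<in> \<Union>\<C>" "b \<in> \<Union>\<C>" for a b
  proof -
    from that obtain F G where F: "F \<in> \<C>" "a \<in> F" and G: "G \<in> \<C>" "b \<in> G"
      by blast
    with comparable[OF F(1) G(1)] have "a \<in> F \<and> b \<in> F \<or> a \<in> G \<and> b \<in> G"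
      by blast
    with F(1) G(1) show ?thesis
      using filters filter_meet_mem by blast
  qed
  with assms(1) filters show ?thesis
    unfolding is_filter_def by blast
qed

lemma is_filter_filter_join:
  assumes F: "is_filter A F"
    and S: "S \<subseteq> pcar A" "S \<noteq> {}" "\<And>d d'. d \<in> S \<Longrightarrow> d' \<in> S \<Longrightarrow> pmeet A d d' \<in> S"
  shows "is_filter A (filter_join A F S)"
  unfolding is_filter_def
proof (intro conjI ballI impI)
  have FA: "F \<subseteq> pcar A"
    using F by (rule filter_subset_carrier)
  show "filter_join A F S \<subseteq> pcar A"
    unfolding filter_join_def by blast
  obtain c d where "c \<in> F" "d \<in> S"
    using F S(2) unfolding is_filter_def by blast
  with FA S(1) have "pmeet A c d \<in> filter_join A F S"
    unfolding filter_join_def by (blast intro: meet_closed le_refl)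
  then show "filter_join A F S \<noteq> {}"
    by blast
next
  fix x b
  assume x: "x \<in> filter_join A F S" and b: "b \<in> pcar A" "psl_le A x b"
  then obtain c d where cd: "c \<in> F" "d \<in> S" "psl_le A (pmeet A c d) x" and "x \<in> pcar A"
    unfolding filter_join_def by blast
  moreover have "c \<in> pcar A" "d \<in> pcar A"
    using cd F S(1) filter_subset_carrier by blast+
  ultimately have "psl_le A (pmeet A c d) b"
    using b le_trans meet_closed by blast
  with cd b show "b \<in> filter_join A F S"
    unfolding filter_join_def by blast
next
  fix x x'
  assume "x \<in> filter_join A F S" "x' \<in> filter_join A F S"
  then obtain c d c' d' where cd: "c \<in> F" "d \<in> S" "psl_le A (pmeet A c d) x"
    and cd': "c' \<in> F" "d' \<in> S" "psl_le A (pmeet A c' d') x'"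
    and x: "x \<in> pcar A" "x' \<in> pcar A"
    unfolding filter_join_def by blast
  have carrier: "c \<in> pcar A" "c' \<in> pcar A" "d \<in> pcar A" "d' \<in> pcar A"
    using cd cd' F S(1) filter_subset_carrier by blast+
  let ?e = "pmeet A (pmeet A c c') (pmeet A d d')"
  have e: "?e \<in> pcar A"
    using carrier by (simp add: meet_closed)
  have "psl_le A ?e (pmeet A c d)" "psl_le A ?e (pmeet A c' d')"
    by (rule meet_mono; simp add: carrier meet_closed meet_le1 meet_le2)+
  then have "psl_le A ?e x" "psl_le A ?e x'"
    using le_trans[OF e _ x(1) _ cd(3)] le_trans[OF e _ x(2) _ cd'(3)] carrier meet_closed
    by blast+
  then have "psl_le A ?e (pmeet A x x')"
    using le_meetI e x by blast
  moreover have "pmeet A c c' \<in> F" "pmeet A d d' \<in> S"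
    using F cd cd' S(3) by (auto intro: filter_meet_mem)
  ultimately show "pmeet A x x' \<in> filter_join A F S"
    unfolding filter_join_def using x meet_closed by blast
qed

lemma filter_join_upper1: "\<lbrakk>F \<subseteq> pcar A; S \<subseteq> pcar A; S \<noteq> {}\<rbrakk> \<Longrightarrow> F \<subseteq> filter_join A F S"
  unfolding filter_join_def using meet_le1 by blast

lemma filter_join_upper2: "\<lbrakk>F \<subseteq> pcar A; S \<subseteq> pcar A; F \<noteq> {}\<rbrakk> \<Longrightarrow> S \<subseteq> filter_join A F S"
  unfolding filter_join_def using meet_le2 by blast

lemma zero_mem_filter_join_iff:
  assumes "F \<subseteq> pcar A" "S \<subseteq> pcar A"
  shows "pzero A \<in> filter_join A F S \<longleftrightarrow> (\<exists>c\<in>F. \<exists>d\<in>S. psl_le A c (pneg A d))"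
  unfolding filter_join_def
  using assms zero_closed meet_closed le_zero_iff meet_eq_zero_iff_le_neg by blast

lemma ultrafilter_maximal:
  assumes M: "ultrafilter A M" and G: "is_filter A G" "M \<subseteq> G" "G \<noteq> M"
  shows "G = pcar A"
proof -
  obtain a where a: "a \<in> G" "a \<notin> M"
    using G(2,3) by blast
  then have "a \<in> pcar A"
    using G(1) filter_subset_carrier by blast
  with a M G(2) have "pneg A a \<in> G"
    unfolding ultrafilter_def by blast
  with a(1) G(1) have "pmeet A a (pneg A a) \<in> G"
    by (simp add: filter_meet_mem)
  with \<open>a \<in> pcar A\<close> have "pzero A \<in> G"
    by (simp add: meet_neg_self)
  with G(1) show ?thesis
    using zero_mem_filter_iff by blast
qed

lemma ultrafilter_mi_filter:
  assumes M: "ultrafilter A M"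
  shows "mi_filter A M"
proof -
  have filter: "is_filter A M" and proper: "M \<noteq> pcar A"
    using M zero_closed unfolding ultrafilter_def by auto
  have "\<not> (is_filter A G \<and> is_filter A H \<and> G \<noteq> M \<and> H \<noteq> M \<and> M = G \<inter> H)" for G H
    using ultrafilter_maximal[OF M, of G] ultrafilter_maximal[OF M, of H] proper by blast
  with filter proper show ?thesis
    unfolding mi_filter_def by blast
qed

lemma ultrafilter_extension:
  assumes G: "is_filter A G" "pzero A \<notin> G"
  shows "\<exists>M. ultrafilter A M \<and> G \<subseteq> M"
proof -
  let ?P = "{H. is_filter A H \<and> pzero A \<notin> H \<and> G \<subseteq> H}"
  have "?P \<noteq> {}"
    using G by blast
  moreover have "\<Union>\<C> \<in> ?P" if "\<C> \<noteq> {}" "subset.chain ?P \<C>" for \<C>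
  proof -
    have "subset.chain {F. is_filter A F} \<C>"
      using that(2) unfolding subset_chain_def by blast
    with that(1) have "is_filter A (\<Union>\<C>)"
      by (rule is_filter_Union_chain)
    moreover have "pzero A \<notin> \<Union>\<C>" "G \<subseteq> \<Union>\<C>"
      using that unfolding subset_chain_def by blast+
    ultimately show ?thesis
      by blast
  qed
  ultimately have "\<exists>M\<in>?P. \<forall>H\<in>?P. M \<subseteq> H \<longrightarrow> H = M"
    by (rule subset_Zorn_nonempty)
  then obtain M where "M \<in> ?P" and maximal: "\<forall>H\<in>?P. M \<subseteq> H \<longrightarrow> H = M" ..
  then have M: "is_filter A M" "pzero A \<notin> M" "G \<subseteq> M"
    by blast+
  have MA: "M \<subseteq> pcar A"
    using M(1) by (rule filter_subset_carrier)
  have "pneg A a \<in> M" if a: "a \<in> pcar A" and "a \<notin> M" for a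
  proof -
    let ?J = "filter_join A M {a}"
    have J: "is_filter A ?J"
      using M(1) a by (intro is_filter_filter_join) (auto simp: meet_idem)
    have "M \<noteq> {}"
      using M(1) unfolding is_filter_def by blast
    with MA a have "M \<subseteq> ?J" "a \<in> ?J"
      using filter_join_upper1[of M "{a}"] filter_join_upper2[of M "{a}"] by auto
    have "pzero A \<in> ?J"
    proof (rule ccontr)
      assume "pzero A \<notin> ?J"
      with J M(3) \<open>M \<subseteq> ?J\<close> have "?J \<in> ?P"
        by blast
      with maximal \<open>M \<subseteq> ?J\<close> have "?J = M"
        by blast
      with \<open>a \<in> ?J\<close> \<open>a \<notin> M\<close> show False
        by blast
    qed
    then obtain c where "c \<in> M" "psl_le A c (pneg A a)"
      using zero_mem_filter_join_iff MA a by blast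
    then show ?thesis
      using M(1) a MA neg_closed filter_upward_closed by blast
  qed
  with M show ?thesis
    unfolding ultrafilter_def by blast
qed

end

lemma psl_hom_le:
  "\<lbrakk>psl_hom A B f; a \<in> pcar A; b \<in> pcar A; psl_le A a b\<rbrakk> \<Longrightarrow> psl_le B (f a) (f b)"
  unfolding psl_hom_def psl_le_def by metis

lemma dom_lower_star:
  "dom (lower_star A B f) = {F \<in> mi_filters B. {a \<in> pcar A. f a \<in> F} \<in> mi_filters A}"
  unfolding lower_star_def dom_def by auto

lemma the_lower_star:
  "F \<in> dom (lower_star A B f) \<Longrightarrow> the (lower_star A B f F) = {a \<in> pcar A. f a \<in> F}"
  unfolding lower_star_def dom_def by (auto split: if_splits)

locale psl_homomorphism =
  A: pseudocomplemented_semilattice A + B: pseudocomplemented_semilattice B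
  for A :: "'a psl" and B :: "'b psl" +
  fixes f :: "'a \<Rightarrow> 'b"
  assumes hom: "psl_hom A B f"
begin

lemma maps_carrier: "a \<in> pcar A \<Longrightarrow> f a \<in> pcar B"
  and preserves_meet: "a \<in> pcar A \<Longrightarrow> b \<in> pcar A \<Longrightarrow> f (pmeet A a b) = pmeet B (f a) (f b)"
  and preserves_neg: "a \<in> pcar A \<Longrightarrow> f (pneg A a) = pneg B (f a)"
  and preserves_zero: "f (pzero A) = pzero B"
  using hom unfolding psl_hom_def by blast+

lemma ultrafilter_vimage:
  assumes M: "ultrafilter B M"
  shows "ultrafilter A {a \<in> pcar A. f a \<in> M}"
proof -
  have M_filter: "is_filter B M" and M_proper: "pzero B \<notin> M"
    and M_ultra: "\<And>b. b \<in> pcar B \<Longrightarrow> b \<in> M \<or> pneg B b \<in> M"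
    using M unfolding ultrafilter_def by blast+
  have "f (pone A) \<in> M"
    using hom B.filter_one_mem[OF M_filter] unfolding psl_hom_def by simp
  then have "is_filter A {a \<in> pcar A. f a \<in> M}"
    unfolding is_filter_def
    using A.one_closed A.meet_closed B.filter_upward_closed[OF M_filter]
      B.filter_meet_mem[OF M_filter] psl_hom_le[OF hom] maps_carrier preserves_meet
    by auto
  with M_proper M_ultra show ?thesis
    unfolding ultrafilter_def by (auto simp: maps_carrier preserves_neg preserves_zero A.neg_closed)
qed

lemma ultrafilter_in_dom_lower_star:
  assumes "ultrafilter B M"
  shows "M \<in> dom (lower_star A B f)"
proof -
  have "mi_filter B M" "mi_filter A {a \<in> pcar A. f a \<in> M}"
    using assms by (simp_all add: B.ultrafilter_mi_filter A.ultrafilter_mi_filter ultrafilter_vimage)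
  then show ?thesis
    unfolding dom_lower_star mi_filters_def by simp
qed

lemma ultrafilter_extending_filter_and_image:
  assumes F: "is_filter B F" and G: "is_filter A G" "pzero A \<notin> G"
    and vimage_le: "{a \<in> pcar A. f a \<in> F} \<subseteq> G"
  shows "\<exists>M. ultrafilter B M \<and> F \<subseteq> M \<and> G \<subseteq> {a \<in> pcar A. f a \<in> M}"
proof -
  have GA: "G \<subseteq> pcar A" and FB: "F \<subseteq> pcar B"
    using G(1) F by (simp_all add: A.filter_subset_carrier B.filter_subset_carrier)
  have "F \<noteq> {}" "G \<noteq> {}"
    using F G(1) unfolding is_filter_def by blast+
  have image: "f ` G \<subseteq> pcar B" "f ` G \<noteq> {}"
    using GA \<open>G \<noteq> {}\<close> maps_carrier by auto
  have image_meet: "pmeet B d d' \<in> f ` G" if "d \<in> f ` G" "d' \<in> f ` G" for d d'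
  proof -
    from that obtain a a' where "a \<in> G" "a' \<in> G" "d = f a" "d' = f a'"
      by blast
    with G(1) GA have "pmeet A a a' \<in> G" "pmeet B d d' = f (pmeet A a a')"
      by (auto simp: A.filter_meet_mem preserves_meet subsetD)
    then show ?thesis
      by simp
  qed
  let ?J = "filter_join B F (f ` G)"
  have "pzero B \<notin> ?J"
  proof
    assume "pzero B \<in> ?J"
    then obtain c a where "c \<in> F" "a \<in> G" "psl_le B c (pneg B (f a))"
      using B.zero_mem_filter_join_iff[OF FB image(1)] by blast
    moreover have "a \<in> pcar A"
      using \<open>a \<in> G\<close> GA by blast
    ultimately have "f (pneg A a) \<in> F"
      using B.filter_upward_closed[OF F] maps_carrier B.neg_closed by (simp add: preserves_neg)
    with \<open>a \<in> pcar A\<close> have "pneg A a \<in> G"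
      using vimage_le A.neg_closed by blast
    with \<open>a \<in> G\<close> G(1) have "pmeet A a (pneg A a) \<in> G"
      by (simp add: A.filter_meet_mem)
    with \<open>a \<in> pcar A\<close> G(2) show False
      by (simp add: A.meet_neg_self)
  qed
  moreover have "is_filter B ?J"
    using F image image_meet by (rule B.is_filter_filter_join)
  ultimately obtain M where "ultrafilter B M" "?J \<subseteq> M"
    using B.ultrafilter_extension by blast
  moreover have "F \<subseteq> ?J" "f ` G \<subseteq> ?J"
    using FB image \<open>F \<noteq> {}\<close> by (simp_all add: B.filter_join_upper1 B.filter_join_upper2)
  ultimately show ?thesis
    using GA by blast
qed

lemma partial_neg_pmorphism_lower_star:
  "partial_neg_pmorphism (mi_filters B) (\<subseteq>) (mi_filters A) (\<subseteq>) (lower_star A B f)"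
  unfolding partial_neg_pmorphism_def
proof (intro conjI ballI impI)
  show "dom (lower_star A B f) \<subseteq> mi_filters B"
    unfolding dom_lower_star by blast
next
  fix F
  assume "F \<in> dom (lower_star A B f)"
  then show "the (lower_star A B f F) \<in> mi_filters A"
    by (simp add: the_lower_star dom_lower_star)
next
  fix F F'
  assume "F \<in> dom (lower_star A B f)" "F' \<in> dom (lower_star A B f)" "F \<subseteq> F'"
  then show "the (lower_star A B f F) \<subseteq> the (lower_star A B f F')"
    by (auto simp: the_lower_star)
next
  have "F \<in> down (mi_filters B) (\<subseteq>) {M \<in> mi_filters B. up (mi_filters B) (\<subseteq>) {M} \<subseteq> dom (lower_star A B f)}"
    if "F \<in> mi_filters B" for F
  proof -
    from that have "is_filter B F" "pzero B \<notin> F"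
      unfolding mi_filters_def mi_filter_def using B.zero_mem_filter_iff by blast+
    then obtain M where M: "ultrafilter B M" "F \<subseteq> M"
      using B.ultrafilter_extension by blast
    then have "M \<in> mi_filters B"
      by (simp add: mi_filters_def B.ultrafilter_mi_filter)
    moreover have "up (mi_filters B) (\<subseteq>) {M} \<subseteq> dom (lower_star A B f)"
    proof
      fix N
      assume "N \<in> up (mi_filters B) (\<subseteq>) {M}"
      then have "mi_filter B N" "M \<subseteq> N"
        unfolding up_def mi_filters_def by auto
      then have "N = M"
        using B.ultrafilter_maximal[OF M(1), of N] unfolding mi_filter_def by blast
      then show "N \<in> dom (lower_star A B f)"
        using M(1) by (simp add: ultrafilter_in_dom_lower_star)
    qed
    ultimately show ?thesis
      unfolding down_def using that M(2) by auto
  qed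
  then show "mi_filters B =
      down (mi_filters B) (\<subseteq>) {M \<in> mi_filters B. up (mi_filters B) (\<subseteq>) {M} \<subseteq> dom (lower_star A B f)}"
    unfolding down_def by blast
next
  fix F G
  assume F: "F \<in> dom (lower_star A B f)" and G: "G \<in> mi_filters A"
    and "the (lower_star A B f F) \<subseteq> G"
  then have "{a \<in> pcar A. f a \<in> F} \<subseteq> G"
    by (simp add: the_lower_star)
  moreover have "is_filter B F" "is_filter A G" "pzero A \<notin> G"
    using F G unfolding dom_lower_star mi_filters_def mi_filter_def
    using A.zero_mem_filter_iff by auto
  ultimately obtain M where "ultrafilter B M" "F \<subseteq> M" "G \<subseteq> {a \<in> pcar A. f a \<in> M}"
    using ultrafilter_extending_filter_and_image by blast
  moreover from \<open>ultrafilter B M\<close> have "M \<in> dom (lower_star A B f)"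
    by (rule ultrafilter_in_dom_lower_star)
  ultimately show "\<exists>M\<in>dom (lower_star A B f). F \<subseteq> M \<and> G \<subseteq> the (lower_star A B f M)"
    by (auto simp: the_lower_star)
qed

end

lemma partial_neg_pmorphismD:
  assumes "partial_neg_pmorphism X leX Y leY p" and "p x = Some y"
  shows partial_neg_pmorphism_dom: "x \<in> X"
    and partial_neg_pmorphism_range: "y \<in> Y"
    and partial_neg_pmorphism_mono:
      "\<And>z y'. \<lbrakk>p z = Some y'; leX x z\<rbrakk> \<Longrightarrow> leY y y'"
    and partial_neg_pmorphism_lift:
      "\<And>u. \<lbrakk>u \<in> Y; leY y u\<rbrakk> \<Longrightarrow> \<exists>z y'. p z = Some y' \<and> leX x z \<and> leY u y'"
proof -
  have "x \<in> dom p" "the (p x) = y"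
    using assms(2) by auto
  moreover have "dom p \<subseteq> X" "\<forall>x\<in>dom p. the (p x) \<in> Y"
    and mono: "\<forall>x\<in>dom p. \<forall>z\<in>dom p. leX x z \<longrightarrow> leY (the (p x)) (the (p z))"
    and lift: "\<forall>x\<in>dom p. \<forall>y\<in>Y. leY (the (p x)) y \<longrightarrow> (\<exists>z\<in>dom p. leX x z \<and> leY y (the (p z)))"
    using assms(1) unfolding partial_neg_pmorphism_def by blast+
  ultimately show "x \<in> X" "y \<in> Y"
    by blast+
  show "leY y y'" if "p z = Some y'" "leX x z" for z y'
    using mono \<open>x \<in> dom p\<close> \<open>the (p x) = y\<close> that by force
  show "\<exists>z y'. p z = Some y' \<and> leX x z \<and> leY u y'" if "u \<in> Y" "leY y u" for u
    using lift \<open>x \<in> dom p\<close> \<open>the (p x) = y\<close> that by fastforce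
qed

lemma mem_up_map_iff:
  "w \<in> up_map X leX Y p U \<longleftrightarrow>
     w \<in> X \<and> (\<forall>x\<in>X. leX w x \<longrightarrow> (\<forall>y\<in>Y. p x = Some y \<longrightarrow> y \<in> U))"
  unfolding up_map_def down_def by blast

lemma up_map_is_upset:
  assumes "is_poset X leX"
  shows "is_upset X leX (up_map X leX Y p U)"
proof -
  have trans: "\<And>x y z. \<lbrakk>x \<in> X; y \<in> X; z \<in> X; leX x y; leX y z\<rbrakk> \<Longrightarrow> leX x z"
    using assms unfolding is_poset_def by blast
  show ?thesis
    unfolding is_upset_def
  proof (intro conjI ballI impI subsetI)
    fix u x
    assume "u \<in> up_map X leX Y p U" "x \<in> X" "leX u x"
    then show "x \<in> up_map X leX Y p U"
      unfolding mem_up_map_iff by (meson trans)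
  qed (simp add: mem_up_map_iff)
qed

lemma up_map_Int: "up_map X leX Y p (U \<inter> V) = up_map X leX Y p U \<inter> up_map X leX Y p V"
  unfolding set_eq_iff Int_iff mem_up_map_iff by blast

lemma up_map_carrier: "up_map X leX Y p Y = X"
  unfolding set_eq_iff mem_up_map_iff by blast

lemma partial_neg_pmorphism_defined_above:
  assumes "is_poset X leX" "partial_neg_pmorphism X leX Y leY p" "x \<in> X"
  shows "\<exists>z y. p z = Some y \<and> leX x z"
proof -
  from assms(2,3) obtain z where "z \<in> X" "leX x z" "up X leX {z} \<subseteq> dom p"
    unfolding partial_neg_pmorphism_def down_def by blast
  moreover have "z \<in> up X leX {z}"
    using \<open>z \<in> X\<close> assms(1) unfolding up_def is_poset_def by blast
  ultimately show ?thesis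
    by blast
qed

lemma up_map_empty:
  assumes "is_poset X leX" "partial_neg_pmorphism X leX Y leY p"
  shows "up_map X leX Y p {} = {}"
proof -
  have "w \<notin> up_map X leX Y p {}" if w: "w \<in> X" for w
  proof -
    obtain z y where "p z = Some y" "leX w z"
      using partial_neg_pmorphism_defined_above[OF assms w] by blast
    moreover have "z \<in> X" "y \<in> Y"
      using partial_neg_pmorphismD[OF assms(2) \<open>p z = Some y\<close>] by blast+
    ultimately show ?thesis
      unfolding mem_up_map_iff by blast
  qed
  then show ?thesis
    unfolding up_map_def by blast
qed

lemma up_map_neg_subset:
  assumes X: "is_poset X leX" and Y: "is_poset Y leY" and p: "partial_neg_pmorphism X leX Y leY p"
  shows "up_map X leX Y p (Y - down Y leY U) \<subseteq> X - down X leX (up_map X leX Y p U)"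
proof
  fix w
  assume w: "w \<in> up_map X leX Y p (Y - down Y leY U)"
  then have "w \<in> X"
    by (simp add: mem_up_map_iff)
  moreover have "w \<notin> down X leX (up_map X leX Y p U)"
  proof
    assume "w \<in> down X leX (up_map X leX Y p U)"
    then obtain x where x: "x \<in> up_map X leX Y p U" "leX w x"
      unfolding down_def by blast
    then have "x \<in> X"
      by (simp add: mem_up_map_iff)
    then obtain z y where z: "p z = Some y" "leX x z"
      using partial_neg_pmorphism_defined_above[OF X p] by blast
    then have "z \<in> X" "y \<in> Y"
      using partial_neg_pmorphismD[OF p] by blast+
    with x z have "y \<in> U"
      by (simp add: mem_up_map_iff)
    moreover have "leY y y"
      using Y \<open>y \<in> Y\<close> unfolding is_poset_def by blast
    ultimately have "y \<in> down Y leY U"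
      unfolding down_def using \<open>y \<in> Y\<close> by blast
    moreover have "leX w z"
      using X \<open>w \<in> X\<close> \<open>x \<in> X\<close> \<open>z \<in> X\<close> x(2) z(2) unfolding is_poset_def by blast
    ultimately show False
      using w \<open>z \<in> X\<close> \<open>y \<in> Y\<close> z(1) by (simp add: mem_up_map_iff)
  qed
  ultimately show "w \<in> X - down X leX (up_map X leX Y p U)"
    by blast
qed

lemma up_map_neg_supset:
  assumes X: "is_poset X leX" and p: "partial_neg_pmorphism X leX Y leY p"
    and U: "is_upset Y leY U"
  shows "X - down X leX (up_map X leX Y p U) \<subseteq> up_map X leX Y p (Y - down Y leY U)"
proof
  fix w
  assume w: "w \<in> X - down X leX (up_map X leX Y p U)"
  have "y \<notin> down Y leY U" if x: "x \<in> X" "leX w x" "p x = Some y" for x y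
  proof
    assume "y \<in> down Y leY U"
    then obtain u where u: "u \<in> U" "u \<in> Y" "leY y u"
      using U unfolding down_def is_upset_def by blast
    then obtain z v where z: "p z = Some v" "leX x z" "leY u v"
      using partial_neg_pmorphism_lift[OF p x(3)] by blast
    then have "z \<in> X" "v \<in> U"
      using partial_neg_pmorphismD[OF p z(1)] u U unfolding is_upset_def by blast+
    with w x z(2) X have "z \<notin> up_map X leX Y p U"
      unfolding down_def is_poset_def by blast
    with \<open>z \<in> X\<close> obtain x' v' where x': "x' \<in> X" "leX z x'" "v' \<in> Y" "p x' = Some v'" "v' \<notin> U"
      unfolding mem_up_map_iff by blast
    then have "leY v v'"
      using partial_neg_pmorphism_mono[OF p z(1)] by blast
    with \<open>v \<in> U\<close> x' U show False
      unfolding is_upset_def by blast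
  qed
  with w show "w \<in> up_map X leX Y p (Y - down Y leY U)"
    unfolding mem_up_map_iff by blast
qed

lemma up_map_neg:
  assumes "is_poset X leX" "is_poset Y leY" "partial_neg_pmorphism X leX Y leY p"
    and "is_upset Y leY U"
  shows "up_map X leX Y p (Y - down Y leY U) = X - down X leX (up_map X leX Y p U)"
  using up_map_neg_subset[OF assms(1-3)] up_map_neg_supset[OF assms(1,3,4)] by (rule equalityI)

lemma psl_hom_up_map:
  assumes "is_poset X leX" "is_poset Y leY" "partial_neg_pmorphism X leX Y leY p"
  shows "psl_hom (up_psl Y leY) (up_psl X leX) (up_map X leX Y p)"
  unfolding psl_hom_def up_psl_def
  by (simp add: up_map_is_upset[OF assms(1)] up_map_Int up_map_empty[OF assms(1,3)]
      up_map_carrier up_map_neg[OF assms])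

theorem proposition3p9:
  fixes A :: "'a psl" and B :: "'b psl" and f :: "'a \<Rightarrow> 'b"
    and X :: "'x set" and leX :: "'x \<Rightarrow> 'x \<Rightarrow> bool"
    and Y :: "'y set" and leY :: "'y \<Rightarrow> 'y \<Rightarrow> bool"
    and p :: "'x \<Rightarrow> 'y option"
  shows "(is_psl A \<and> is_psl B \<and> psl_hom A B f \<longrightarrow>
            partial_neg_pmorphism (mi_filters B) (\<subseteq>) (mi_filters A) (\<subseteq>) (lower_star A B f))
       \<and> (is_poset X leX \<and> is_poset Y leY \<and> partial_neg_pmorphism X leX Y leY p \<longrightarrow>
            psl_hom (up_psl Y leY) (up_psl X leX) (up_map X leX Y p))"
  using psl_homomorphism.partial_neg_pmorphism_lower_star psl_hom_up_map
  unfolding psl_homomorphism_def psl_homomorphism_axioms_def pseudocomplemented_semilattice_def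
  by blast

end
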